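(* Let $(V,h)$ be an object of $\mathrm{Herm}(\mathrm{sVect})$ whose Hermitian pairing has signature $(p_1,p_2,p_3,p_4)$. Then the dual super Hermitian vector space $V^*$, equipped with the dual Hermitian pairing, has signature $(p_1,p_2,p_4,p_3)$.
   Context: $\mathrm{sVect}$: finite-dimensional complex $\mathbb{Z}/2$-graded vector spaces with even linear maps, graded tensor product and Koszul braiding $v\otimes w\mapsto(-1)^{|v||w|}w\otimes v$. $V^*$ is the graded space of all linear functionals, $T^*(f)=f\circ T$, with evaluation $f\otimes v\mapsto f(v)$; this is the chosen dual functor. Anti-involution $dV=\overline{V}^*$ (identified with $\overline{V^*}$ by $\bar f(\bar v)=\overline{f(v)}$), monoidal structure $\chi(\bar f\otimes\bar g)(\bar v\otimes\bar w)=(-1)^{|g||v|}\overline{f(v)g(w)}$, $\eta_V(v)=\Phi_v$ with $\Phi_v(f)=(-1)^{|f||v|}f(v)$. $\mathrm{Herm}(\mathrm{sVect})$: objects $(V,h)$ with $h\colon V\to dV$ an even isomorphism with $d(h)\circ\eta_V=h$; equivalently $V$ with a nondegenerate sesquilinear form $\langle\cdot,\cdot\rangle$, $V_0\perp V_1$, $\langle v,w\rangle=(-1)^{|v||w|}\overline{\langle w,v\rangle}$. An orthonormal basis is a homogeneous basis $e_1,\dots,e_n$ with $\langle e_i,e_j\rangle=\delta_{ij}\langle e_j,e_j\rangle$ and $\langle e_j,e_j\rangle\in\{\pm1,\pm i\}$; the signature $(p_1,p_2,p_3,p_4)$ counts the $j$ with $\langle e_j,e_j\rangle$ equal to $+1,-1,+i,-i$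 respectively. The dual Hermitian pairing on $V^*$ is the composite $V^*\xrightarrow{(h^* )^{-1}}(dV)^*\cong d(V^* )$, where the last isomorphism is the canonical uniqueness-of-duals isomorphism (both are duals of $dV$, using that $d$ is symmetric monoidal). *)

theory Defs
  imports "HOL-Analysis.Analysis" "HOL-Library.Function_Algebras"
begin

definition super_space ::
  "(complex \<Rightarrow> 'v::ab_group_add \<Rightarrow> 'v) \<Rightarrow> 'v set \<Rightarrow> 'v set \<Rightarrow> 'v set \<Rightarrow> bool" where
  "super_space sc Bas V0 V1 \<longleftrightarrow>
     finite_dimensional_vector_space sc Bas \<and>
     module.subspace sc V0 \<and> module.subspace sc V1 \<and>
     V0 \<inter> V1 = {0} \<and> (\<forall>v. \<exists>a\<in>V0. \<exists>b\<in>V1. v = a + b)"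

definition fscale :: "complex \<Rightarrow> ('v \<Rightarrow> complex) \<Rightarrow> ('v \<Rightarrow> complex)" where
  "fscale c f = (\<lambda>x. c * f x)"

definition dual_space :: "(complex \<Rightarrow> 'v::ab_group_add \<Rightarrow> 'v) \<Rightarrow> ('v \<Rightarrow> complex) set" where
  "dual_space sc = {f. Vector_Spaces.linear sc (*) f}"

definition dual_even :: "(complex \<Rightarrow> 'v::ab_group_add \<Rightarrow> 'v) \<Rightarrow> 'v set \<Rightarrow> ('v \<Rightarrow> complex) set" where
  "dual_even sc V1 = {f \<in> dual_space sc. \<forall>v\<in>V1. f v = 0}"

definition dual_odd :: "(complex \<Rightarrow> 'v::ab_group_add \<Rightarrow> 'v) \<Rightarrow> 'v set \<Rightarrow> ('v \<Rightarrow> complex) set" where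
  "dual_odd sc V0 = {f \<in> dual_space sc. \<forall>v\<in>V0. f v = 0}"

text \<open>Conjugate-linear functionals on a space W (with scalar multiplication s),
extended by 0 outside W.  For W = V this is dV = (conj V)^*; for W = V^* it is
d(V^*) = (conj V^*)^*.\<close>
definition conj_functionals :: "(complex \<Rightarrow> 'a::ab_group_add \<Rightarrow> 'a) \<Rightarrow> 'a set \<Rightarrow> ('a \<Rightarrow> complex) set" where
  "conj_functionals s W = {\<phi>.
     (\<forall>x\<in>W. \<forall>y\<in>W. \<phi> (x + y) = \<phi> x + \<phi> y) \<and>
     (\<forall>c. \<forall>x\<in>W. \<phi> (s c x) = cnj c * \<phi> x) \<and>
     (\<forall>x. x \<notin> W \<longrightarrow> \<phi> x = 0)}"

definition dV :: "(complex \<Rightarrow> 'v::ab_group_add \<Rightarrow> 'v) \<Rightarrow> ('v \<Rightarrow> complex) set" where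
  "dV sc = conj_functionals sc UNIV"

definition dV_dual :: "(complex \<Rightarrow> 'v::ab_group_add \<Rightarrow> 'v) \<Rightarrow> (('v \<Rightarrow> complex) \<Rightarrow> complex) set" where
  "dV_dual sc = {\<Psi>.
     (\<forall>x\<in>dV sc. \<forall>y\<in>dV sc. \<Psi> (x + y) = \<Psi> x + \<Psi> y) \<and>
     (\<forall>c. \<forall>x\<in>dV sc. \<Psi> (fscale c x) = c * \<Psi> x) \<and>
     (\<forall>x. x \<notin> dV sc \<longrightarrow> \<Psi> x = 0)}"

definition d_dual :: "(complex \<Rightarrow> 'v::ab_group_add \<Rightarrow> 'v) \<Rightarrow> (('v \<Rightarrow> complex) \<Rightarrow> complex) set" where
  "d_dual sc = conj_functionals fscale (dual_space sc)"

text \<open>Evaluation pairing d(V^*) (x) dV -> C exhibiting d(V^*) as a dual of dV: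
Koszul braiding, then chi, then d(coev_V) with coev_V(1) = sum_b b (x) b^*, then d(1) = C.
For homogeneous arguments all Koszul signs cancel on the nonzero terms, giving
  ev(a (x) phi) = sum_b phi(b) * a(b^*),
where b ranges over a basis Bas of V and b^* is the dual basis (coordinate functional).
\<close>
definition dual_ev ::
  "(complex \<Rightarrow> 'v::ab_group_add \<Rightarrow> 'v) \<Rightarrow> 'v set \<Rightarrow> (('v \<Rightarrow> complex) \<Rightarrow> complex) \<Rightarrow> ('v \<Rightarrow> complex) \<Rightarrow> complex" where
  "dual_ev sc Bas a \<phi> = (\<Sum>b\<in>Bas. \<phi> b * a (\<lambda>v. module.representation sc Bas v b))"

text \<open>(h^*)^{-1} : V^* -> (dV)^*, where h : V -> dV, h v = form v, and h^*(Psi) = Psi o h.\<close>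
definition hstar_inv ::
  "(complex \<Rightarrow> 'v::ab_group_add \<Rightarrow> 'v) \<Rightarrow> ('v \<Rightarrow> 'v \<Rightarrow> complex) \<Rightarrow> ('v \<Rightarrow> complex) \<Rightarrow> (('v \<Rightarrow> complex) \<Rightarrow> complex)" where
  "hstar_inv sc form g = (THE \<Psi>. \<Psi> \<in> dV_dual sc \<and> (\<forall>v. \<Psi> (form v) = g v))"

text \<open>Canonical uniqueness-of-duals isomorphism (dV)^* -> d(V^*):
the unique theta(Psi) with ev(theta(Psi) (x) phi) = Psi(phi) for all phi in dV.\<close>
definition duals_iso ::
  "(complex \<Rightarrow> 'v::ab_group_add \<Rightarrow> 'v) \<Rightarrow> 'v set \<Rightarrow> (('v \<Rightarrow> complex) \<Rightarrow> complex) \<Rightarrow> (('v \<Rightarrow> complex) \<Rightarrow> complex)" where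
  "duals_iso sc Bas \<Psi> = (THE a. a \<in> d_dual sc \<and> (\<forall>\<phi>\<in>dV sc. dual_ev sc Bas a \<phi> = \<Psi> \<phi>))"

text \<open>The dual Hermitian pairing on V^*: h_* = theta o (h^*)^{-1},
with the convention <x,y> = h(x)(conj y) used for both V and V^*.\<close>
definition dual_form ::
  "(complex \<Rightarrow> 'v::ab_group_add \<Rightarrow> 'v) \<Rightarrow> 'v set \<Rightarrow> ('v \<Rightarrow> 'v \<Rightarrow> complex) \<Rightarrow> ('v \<Rightarrow> complex) \<Rightarrow> ('v \<Rightarrow> complex) \<Rightarrow> complex" where
  "dual_form sc Bas form g g' = duals_iso sc Bas (hstar_inv sc form g) g'"

text \<open>Object of Herm(sVect): super vector space with a nondegenerate super-Hermitian
sesquilinear form <v,w> = h(v)(conj w) (linear in v, conjugate-linear in w), V0 orthogonal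
to V1, h : V -> dV an (even) isomorphism, and <v,w> = (-1)^{|v||w|} conj <w,v>.\<close>
definition herm_super ::
  "(complex \<Rightarrow> 'v::ab_group_add \<Rightarrow> 'v) \<Rightarrow> 'v set \<Rightarrow> 'v set \<Rightarrow> 'v set \<Rightarrow> ('v \<Rightarrow> 'v \<Rightarrow> complex) \<Rightarrow> bool" where
  "herm_super sc Bas V0 V1 form \<longleftrightarrow>
     super_space sc Bas V0 V1 \<and>
     (\<forall>w. Vector_Spaces.linear sc (*) (\<lambda>v. form v w)) \<and>
     (\<forall>v. form v \<in> dV sc) \<and>
     bij_betw form UNIV (dV sc) \<and>
     (\<forall>v\<in>V0. \<forall>w\<in>V1. form v w = 0 \<and> form w v = 0) \<and>
     (\<forall>v\<in>V0 \<union> V1. \<forall>w\<in>V0 \<union> V1.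
        form v w = (if v \<in> V1 \<and> w \<in> V1 then -1 else 1) * cnj (form w v))"

definition has_signature ::
  "(complex \<Rightarrow> 'a::ab_group_add \<Rightarrow> 'a) \<Rightarrow> 'a set \<Rightarrow> 'a set \<Rightarrow> 'a set \<Rightarrow> ('a \<Rightarrow> 'a \<Rightarrow> complex)
    \<Rightarrow> nat \<Rightarrow> nat \<Rightarrow> nat \<Rightarrow> nat \<Rightarrow> bool" where
  "has_signature s W W0 W1 form p1 p2 p3 p4 \<longleftrightarrow>
     (\<exists>E. finite E \<and> E \<subseteq> W \<and> \<not> module.dependent s E \<and> module.span s E = W \<and>
        (\<forall>e\<in>E. e \<in> W0 \<or> e \<in> W1) \<and>
        (\<forall>e\<in>E. \<forall>e'\<in>E. e \<noteq> e' \<longrightarrow> form e e' = 0) \<and>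
        (\<forall>e\<in>E. form e e \<in> {1, -1, \<i>, -\<i>}) \<and>
        card {e\<in>E. form e e = 1} = p1 \<and> card {e\<in>E. form e e = -1} = p2 \<and>
        card {e\<in>E. form e e = \<i>} = p3 \<and> card {e\<in>E. form e e = -\<i>} = p4)"

end

theory Submission
  imports Defs
begin

(* Take an orthonormal homogeneous basis E of V with <e,e> = eps_e in {1, -1, i, -i} and its
   dual basis e^*, which is homogeneous of the same parity as e.  Unwinding the inverse of h^*
   and the uniqueness-of-duals isomorphism gives <g, g'> = g u for the vector u with
   h u = conj o g'.  For g' = e'^* orthogonality of E forces u = e' / eps_e', hence
   <e^*, e'^*> = delta_ee' / eps_e: inversion fixes 1 and -1 and swaps i and -i. *)

lemma sum_apply: "(\<Sum>i\<in>I. F i) x = (\<Sum>i\<in>I. F i x)"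
  by (induct I rule: infinite_finite_induct) auto

lemma (in module) semilinear_on_sum:
  fixes F :: "'b \<Rightarrow> 'c::ring" and k :: "'a \<Rightarrow> 'c"
  assumes W: "subspace W"
    and add: "\<And>x y. x \<in> W \<Longrightarrow> y \<in> W \<Longrightarrow> F (x + y) = F x + F y"
    and scale: "\<And>c x. x \<in> W \<Longrightarrow> F (scale c x) = k c * F x"
    and h: "\<And>i. i \<in> I \<Longrightarrow> h i \<in> W"
  shows "F (\<Sum>i\<in>I. scale (c i) (h i)) = (\<Sum>i\<in>I. k (c i) * F (h i))"
proof -
  have "F (0 + 0) = F 0 + F 0" using add subspace_0[OF W] by blast
  then have F_0: "F 0 = 0" by simp
  show ?thesis
    using h
  proof (induct I rule: infinite_finite_induct)
    case (insert i I)
    have "(\<Sum>j\<in>I. scale (c j) (h j)) \<in> W"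
      using insert.prems by (intro subspace_sum[OF W] subspace_scale[OF W]) auto
    moreover have "scale (c i) (h i) \<in> W"
      using insert.prems by (intro subspace_scale[OF W]) auto
    ultimately show ?case using insert by (simp add: add scale)
  qed (simp_all add: F_0)
qed

lemma module_fscale: "module fscale"
  by unfold_locales (auto simp: fscale_def algebra_simps)

lemma subspace_conj_functionals: "module.subspace fscale (conj_functionals s W)"
  unfolding module.subspace_def[OF module_fscale] conj_functionals_def fscale_def
  by (auto simp: algebra_simps)

lemma subspace_dual_space:
  assumes "vector_space sc"
  shows "module.subspace fscale (dual_space sc)"
  unfolding module.subspace_def[OF module_fscale] dual_space_def fscale_def Vector_Spaces.linear_iff
  using assms vector_space_over_itself.vector_space_axioms by (auto simp: algebra_simps)

lemma conj_functionals_sum: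
  assumes s: "module s" "module.subspace s W"
    and \<phi>: "\<phi> \<in> conj_functionals s W" and h: "\<And>i. i \<in> I \<Longrightarrow> h i \<in> W"
  shows "\<phi> (\<Sum>i\<in>I. s (c i) (h i)) = (\<Sum>i\<in>I. cnj (c i) * \<phi> (h i))"
  using \<phi> h by (intro module.semilinear_on_sum[OF s]) (auto simp: conj_functionals_def)

lemma dual_space_sum:
  assumes "vector_space sc" and f: "f \<in> dual_space sc"
  shows "f (\<Sum>i\<in>I. sc (c i) (x i)) = (\<Sum>i\<in>I. c i * f (x i))"
proof (rule module.semilinear_on_sum[where k = "\<lambda>c. c"])
  show "module sc" using assms(1) by (simp add: vector_space_def module_def)
  show "module.subspace sc UNIV" by (rule module.subspace_UNIV) fact
qed (use f in \<open>auto simp: dual_space_def Vector_Spaces.linear_iff\<close>)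

lemma dV_dual_sum:
  assumes Q: "Q \<in> dV_dual sc" and h: "\<And>i. i \<in> I \<Longrightarrow> h i \<in> dV sc"
  shows "Q (\<Sum>i\<in>I. fscale (c i) (h i)) = (\<Sum>i\<in>I. c i * Q (h i))"
proof (rule module.semilinear_on_sum[OF module_fscale, where W = "dV sc"])
  show "module.subspace fscale (dV sc)" unfolding dV_def by (rule subspace_conj_functionals)
qed (use Q h in \<open>unfold dV_dual_def, blast+\<close>)

lemma conj_comp_in_dV: "f \<in> dual_space sc \<Longrightarrow> cnj \<circ> f \<in> dV sc"
  unfolding dV_def conj_functionals_def dual_space_def Vector_Spaces.linear_iff by simp

lemma conj_precomp_in_d_dual:
  assumes "vector_space sc" and Q: "Q \<in> dV_dual sc"
  shows "(\<lambda>f. if f \<in> dual_space sc then Q (cnj \<circ> f) else 0) \<in> d_dual sc"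
proof -
  have Q_add: "Q (x + y) = Q x + Q y" if "x \<in> dV sc" "y \<in> dV sc" for x y
    using Q that unfolding dV_dual_def by blast
  have Q_scale: "Q (fscale c x) = c * Q x" if "x \<in> dV sc" for c x
    using Q that unfolding dV_dual_def by blast
  note dual_subspace = subspace_dual_space[OF assms(1)]
  show ?thesis
    unfolding d_dual_def conj_functionals_def
  proof (intro CollectI conjI ballI allI impI)
    fix f g assume fg: "f \<in> dual_space sc" "g \<in> dual_space sc"
    have "cnj \<circ> (f + g) = (cnj \<circ> f) + (cnj \<circ> g)" by auto
    moreover have "f + g \<in> dual_space sc"
      using fg by (rule module.subspace_add[OF module_fscale dual_subspace])
    ultimately show "(if f + g \<in> dual_space sc then Q (cnj \<circ> (f + g)) else 0) =
        (if f \<in> dual_space sc then Q (cnj \<circ> f) else 0) +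
        (if g \<in> dual_space sc then Q (cnj \<circ> g) else 0)"
      using fg by (simp add: Q_add conj_comp_in_dV)
  next
    fix c f assume f: "f \<in> dual_space sc"
    have "cnj \<circ> fscale c f = fscale (cnj c) (cnj \<circ> f)" by (auto simp: fscale_def)
    moreover have "fscale c f \<in> dual_space sc"
      using f by (rule module.subspace_scale[OF module_fscale dual_subspace])
    ultimately show "(if fscale c f \<in> dual_space sc then Q (cnj \<circ> fscale c f) else 0) =
        cnj c * (if f \<in> dual_space sc then Q (cnj \<circ> f) else 0)"
      using f by (simp add: Q_scale conj_comp_in_dV)
  qed simp
qed

abbreviation coordinate ::
    "(complex \<Rightarrow> 'v::ab_group_add \<Rightarrow> 'v) \<Rightarrow> 'v set \<Rightarrow> 'v \<Rightarrow> 'v \<Rightarrow> complex" where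
  "coordinate sc E e \<equiv> \<lambda>v. module.representation sc E v e"

locale complex_basis = finite_dimensional_vector_space sc E
  for sc :: "complex \<Rightarrow> 'v::ab_group_add \<Rightarrow> 'v" and E :: "'v set"
begin

lemma coordinate_in_dual_space: "coordinate sc E e \<in> dual_space sc"
  unfolding dual_space_def using linear_representation[OF independent_Basis span_Basis] by simp

lemma coordinate_basis: "x \<in> E \<Longrightarrow> coordinate sc E e x = (if e = x then 1 else 0)"
  using representation_basis[OF independent_Basis] by simp

lemma inj_on_coordinate: "inj_on (coordinate sc E) E"
proof (rule inj_onI)
  fix e e' assume "e \<in> E" "coordinate sc E e = coordinate sc E e'"
  then have "coordinate sc E e' e = 1" by (metis coordinate_basis)
  with \<open>e \<in> E\<close> show "e = e'" by (simp add: coordinate_basis split: if_splits)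
qed

lemma sum_coordinate_scale: "(\<Sum>e\<in>E. sc (coordinate sc E e v) e) = v"
  by (rule sum_representation_eq) (auto simp: independent_Basis span_Basis finite_Basis)

lemma dual_space_expansion:
  assumes f: "f \<in> dual_space sc"
  shows "(\<Sum>e\<in>E. fscale (f e) (coordinate sc E e)) = f"
proof
  fix x
  have "f x = f (\<Sum>e\<in>E. sc (coordinate sc E e x) e)" by (simp add: sum_coordinate_scale)
  also have "\<dots> = (\<Sum>e\<in>E. coordinate sc E e x * f e)"
    by (rule dual_space_sum[OF vector_space_axioms f])
  finally show "(\<Sum>e\<in>E. fscale (f e) (coordinate sc E e)) x = f x"
    by (simp add: sum_apply fscale_def mult.commute)
qed

lemma dV_expansion:
  assumes \<phi>: "\<phi> \<in> dV sc"
  shows "(\<Sum>e\<in>E. fscale (\<phi> e) (cnj \<circ> coordinate sc E e)) = \<phi>"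
proof
  fix x
  have "\<phi> x = \<phi> (\<Sum>e\<in>E. sc (coordinate sc E e x) e)" by (simp add: sum_coordinate_scale)
  also have "\<dots> = (\<Sum>e\<in>E. cnj (coordinate sc E e x) * \<phi> e)"
    using \<phi> unfolding dV_def
    by (intro conj_functionals_sum[where W = UNIV]) (auto simp: module_axioms)
  finally show "(\<Sum>e\<in>E. fscale (\<phi> e) (cnj \<circ> coordinate sc E e)) x = \<phi> x"
    by (simp add: sum_apply fscale_def mult.commute)
qed

lemma coordinate_independent: "\<not> module.dependent fscale (coordinate sc E ` E)"
proof
  assume "module.dependent fscale (coordinate sc E ` E)"
  then obtain t u where t: "finite t" "t \<subseteq> coordinate sc E ` E"
    and combination: "(\<Sum>f\<in>t. fscale (u f) f) = 0" and "\<exists>f\<in>t. u f \<noteq> 0"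
    unfolding module.dependent_explicit[OF module_fscale] by blast
  then obtain e where e: "e \<in> E" "coordinate sc E e \<in> t" "u (coordinate sc E e) \<noteq> 0"
    by blast
  have "(\<Sum>f\<in>t. fscale (u f) f) e = (\<Sum>f\<in>t. if f = coordinate sc E e then u f else 0)"
    unfolding sum_apply fscale_def
  proof (rule sum.cong[OF refl])
    fix f assume "f \<in> t"
    then obtain e' where "e' \<in> E" "f = coordinate sc E e'" using t(2) by blast
    then show "u f * f e = (if f = coordinate sc E e then u f else 0)"
      using e(1) by (auto simp: coordinate_basis dest: inj_onD[OF inj_on_coordinate])
  qed
  also have "\<dots> = u (coordinate sc E e)" using t(1) e(2) by simp
  finally have "(\<Sum>f\<in>t. fscale (u f) f) e = u (coordinate sc E e)" .
  with combination e(3) show False by simp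
qed

lemma span_coordinate: "module.span fscale (coordinate sc E ` E) = dual_space sc"
proof
  show "module.span fscale (coordinate sc E ` E) \<subseteq> dual_space sc"
    using coordinate_in_dual_space subspace_dual_space[OF vector_space_axioms]
    by (intro module.span_minimal[OF module_fscale]) blast+
  show "dual_space sc \<subseteq> module.span fscale (coordinate sc E ` E)"
  proof
    fix f assume "f \<in> dual_space sc"
    then have "f = (\<Sum>e\<in>E. fscale (f e) (coordinate sc E e))"
      by (simp add: dual_space_expansion)
    also have "\<dots> \<in> module.span fscale (coordinate sc E ` E)"
      by (intro module.span_sum[OF module_fscale] module.span_scale[OF module_fscale]
          module.span_base[OF module_fscale]) auto
    finally show "f \<in> module.span fscale (coordinate sc E ` E)" .
  qed
qed

lemma coordinate_vanishes_on_complement: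
  assumes A: "subspace A" and B: "subspace B" and AB: "A \<inter> B = {0}"
    and EAB: "E \<subseteq> A \<union> B" and e: "e \<in> E" "e \<in> A" and v: "v \<in> B"
  shows "coordinate sc E e v = 0"
proof (rule ccontr)
  assume ne: "coordinate sc E e v \<noteq> 0"
  let ?r = "\<lambda>x. coordinate sc E x v"
  let ?EA = "E \<inter> A"
  have "v = (\<Sum>x\<in>E. sc (?r x) x)" by (simp add: sum_coordinate_scale)
  also have "\<dots> = (\<Sum>x\<in>E - ?EA. sc (?r x) x) + (\<Sum>x\<in>?EA. sc (?r x) x)"
    by (rule sum.subset_diff) (auto simp: finite_Basis)
  finally have split: "(\<Sum>x\<in>?EA. sc (?r x) x) = v - (\<Sum>x\<in>E - ?EA. sc (?r x) x)"
    by (simp add: algebra_simps)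
  have "(\<Sum>x\<in>E - ?EA. sc (?r x) x) \<in> B"
    using EAB by (intro subspace_sum[OF B] subspace_scale[OF B]) auto
  then have "(\<Sum>x\<in>?EA. sc (?r x) x) \<in> B"
    unfolding split by (rule subspace_diff[OF B v])
  moreover have "(\<Sum>x\<in>?EA. sc (?r x) x) \<in> A"
    by (intro subspace_sum[OF A] subspace_scale[OF A]) auto
  ultimately have "(\<Sum>x\<in>?EA. sc (?r x) x) = 0" using AB by blast
  then have "dependent ?EA"
    using finite_Basis ne e by (subst dependent_finite) auto
  then show False using independent_mono[OF independent_Basis] by blast
qed

lemma coordinate_homogeneous:
  assumes V0: "subspace V0" and V1: "subspace V1" and V01: "V0 \<inter> V1 = {0}"
    and homogeneous: "E \<subseteq> V0 \<union> V1" and e: "e \<in> E"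
  shows "coordinate sc E e \<in> dual_even sc V1 \<or> coordinate sc E e \<in> dual_odd sc V0"
proof -
  consider "e \<in> V0" | "e \<in> V1" using homogeneous e by blast
  then show ?thesis
  proof cases
    case 1
    then have "\<forall>v\<in>V1. coordinate sc E e v = 0"
      using coordinate_vanishes_on_complement[OF V0 V1 V01 homogeneous e] by blast
    then show ?thesis using coordinate_in_dual_space unfolding dual_even_def by blast
  next
    case 2
    have "V1 \<inter> V0 = {0}" "E \<subseteq> V1 \<union> V0" using V01 homogeneous by blast+
    then have "\<forall>v\<in>V0. coordinate sc E e v = 0"
      using coordinate_vanishes_on_complement[OF V1 V0 _ _ e 2] by blast
    then show ?thesis using coordinate_in_dual_space unfolding dual_odd_def by blast
  qed
qed

lemma dual_ev_conj:
  assumes a: "a \<in> d_dual sc" and g: "g \<in> dual_space sc"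
  shows "dual_ev sc E a (cnj \<circ> g) = a g"
proof -
  have "a g = a (\<Sum>e\<in>E. fscale (g e) (coordinate sc E e))" by (simp add: dual_space_expansion g)
  also have "\<dots> = (\<Sum>e\<in>E. cnj (g e) * a (coordinate sc E e))"
    by (rule conj_functionals_sum[OF module_fscale subspace_dual_space[OF vector_space_axioms]])
      (use a coordinate_in_dual_space in \<open>auto simp: d_dual_def\<close>)
  finally show ?thesis unfolding dual_ev_def by simp
qed

lemma dual_ev_conj_precomp:
  assumes Q: "Q \<in> dV_dual sc" and \<phi>: "\<phi> \<in> dV sc"
  shows "dual_ev sc E (\<lambda>f. if f \<in> dual_space sc then Q (cnj \<circ> f) else 0) \<phi> = Q \<phi>"
proof -
  have "dual_ev sc E (\<lambda>f. if f \<in> dual_space sc then Q (cnj \<circ> f) else 0) \<phi>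
      = (\<Sum>e\<in>E. \<phi> e * Q (cnj \<circ> coordinate sc E e))"
    unfolding dual_ev_def using coordinate_in_dual_space by simp
  also have "\<dots> = Q (\<Sum>e\<in>E. fscale (\<phi> e) (cnj \<circ> coordinate sc E e))"
    using coordinate_in_dual_space by (intro dV_dual_sum[OF Q, symmetric] conj_comp_in_dV)
  also have "\<dots> = Q \<phi>" by (simp add: dV_expansion \<phi>)
  finally show ?thesis .
qed

lemma duals_iso_apply:
  assumes Q: "Q \<in> dV_dual sc" and f: "f \<in> dual_space sc"
  shows "duals_iso sc E Q f = Q (cnj \<circ> f)"
proof -
  let ?a = "\<lambda>f. if f \<in> dual_space sc then Q (cnj \<circ> f) else 0"
  have "duals_iso sc E Q = ?a"
    unfolding duals_iso_def
  proof (rule the_equality)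
    show "?a \<in> d_dual sc \<and> (\<forall>\<phi>\<in>dV sc. dual_ev sc E ?a \<phi> = Q \<phi>)"
      using conj_precomp_in_d_dual[OF vector_space_axioms Q] dual_ev_conj_precomp[OF Q] by blast
  next
    fix a assume a: "a \<in> d_dual sc \<and> (\<forall>\<phi>\<in>dV sc. dual_ev sc E a \<phi> = Q \<phi>)"
    show "a = ?a"
    proof
      fix g show "a g = ?a g"
      proof (cases "g \<in> dual_space sc")
        case True
        then show ?thesis using a dual_ev_conj[of a g] conj_comp_in_dV[OF True] by simp
      next
        case False
        then show ?thesis using a unfolding d_dual_def conj_functionals_def by simp
      qed
    qed
  qed
  then show ?thesis using f by simp
qed

end

locale herm_super_space =
  fixes sc :: "complex \<Rightarrow> 'v::ab_group_add \<Rightarrow> 'v"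
    and Bas V0 V1 :: "'v set"
    and form :: "'v \<Rightarrow> 'v \<Rightarrow> complex"
  assumes herm_super: "herm_super sc Bas V0 V1 form"
begin

sublocale complex_basis sc Bas
  using herm_super unfolding herm_super_def super_space_def complex_basis_def by blast

lemma grading: "subspace V0" "subspace V1" "V0 \<inter> V1 = {0}"
  using herm_super unfolding herm_super_def super_space_def by blast+

lemma form_in_dV: "form v \<in> dV sc"
  using herm_super unfolding herm_super_def by blast

lemma bij_form: "bij_betw form UNIV (dV sc)"
  using herm_super unfolding herm_super_def by blast

lemma form_linear: "form (x + y) = form x + form y" "form (sc c x) = fscale c (form x)"
proof -
  have "Vector_Spaces.linear sc (*) (\<lambda>v. form v w)" for w
    using herm_super unfolding herm_super_def by blast
  then show "form (x + y) = form x + form y" "form (sc c x) = fscale c (form x)"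
    unfolding Vector_Spaces.linear_iff fscale_def by auto
qed

lemma inv_form: "inv form (form v) = v"
  using bij_betw_imp_inj_on[OF bij_form] by simp

lemma dV_subset_range_form: "dV sc \<subseteq> range form"
  using bij_form unfolding bij_betw_def by blast

lemma precomp_inv_form_in_dV_dual:
  assumes g: "g \<in> dual_space sc"
  shows "(\<lambda>\<phi>. if \<phi> \<in> dV sc then g (inv form \<phi>) else 0) \<in> dV_dual sc"
  unfolding dV_dual_def
proof (intro CollectI conjI ballI allI impI)
  fix \<phi> \<psi> assume "\<phi> \<in> dV sc" "\<psi> \<in> dV sc"
  then obtain v w where "\<phi> = form v" "\<psi> = form w" using dV_subset_range_form by blast
  then show "(if \<phi> + \<psi> \<in> dV sc then g (inv form (\<phi> + \<psi>)) else 0) =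
      (if \<phi> \<in> dV sc then g (inv form \<phi>) else 0) +
      (if \<psi> \<in> dV sc then g (inv form \<psi>) else 0)"
    using form_linear(1)[of v w, symmetric] g
    by (simp add: form_in_dV inv_form dual_space_def Vector_Spaces.linear_iff)
next
  fix c \<phi> assume "\<phi> \<in> dV sc"
  then obtain v where "\<phi> = form v" using dV_subset_range_form by blast
  then show "(if fscale c \<phi> \<in> dV sc then g (inv form (fscale c \<phi>)) else 0) =
      c * (if \<phi> \<in> dV sc then g (inv form \<phi>) else 0)"
    using form_linear(2)[of c v, symmetric] g
    by (simp add: form_in_dV inv_form dual_space_def Vector_Spaces.linear_iff)
qed simp

lemma hstar_inv_form:
  assumes g: "g \<in> dual_space sc"
  shows "hstar_inv sc form g \<in> dV_dual sc" "hstar_inv sc form g (form v) = g v"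
proof -
  let ?P = "\<lambda>\<phi>. if \<phi> \<in> dV sc then g (inv form \<phi>) else 0"
  have P: "?P \<in> dV_dual sc \<and> (\<forall>v. ?P (form v) = g v)"
    using precomp_inv_form_in_dV_dual[OF g] by (simp add: form_in_dV inv_form)
  have "hstar_inv sc form g = ?P"
    unfolding hstar_inv_def
  proof (rule the_equality)
    fix Q assume Q: "Q \<in> dV_dual sc \<and> (\<forall>v. Q (form v) = g v)"
    show "Q = ?P"
    proof
      fix \<phi> show "Q \<phi> = ?P \<phi>"
      proof (cases "\<phi> \<in> dV sc")
        case True
        then obtain v where "\<phi> = form v" using dV_subset_range_form by blast
        then show ?thesis using Q by (simp add: form_in_dV inv_form)
      qed (use Q in \<open>simp add: dV_dual_def\<close>)
    qed
  qed (fact P)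
  with P show "hstar_inv sc form g \<in> dV_dual sc" "hstar_inv sc form g (form v) = g v"
    by simp_all
qed

lemma dual_form_eq:
  assumes g: "g \<in> dual_space sc" and g': "g' \<in> dual_space sc" and u: "form u = cnj \<circ> g'"
  shows "dual_form sc Bas form g g' = g u"
  using duals_iso_apply[OF hstar_inv_form(1)[OF g] g'] hstar_inv_form(2)[OF g]
  unfolding dual_form_def u[symmetric] by simp

end

locale herm_orthonormal_basis = herm_super_space + E: complex_basis sc E for E +
  assumes homogeneous: "E \<subseteq> V0 \<union> V1"
    and orthogonal: "\<And>e e'. e \<in> E \<Longrightarrow> e' \<in> E \<Longrightarrow> e \<noteq> e' \<Longrightarrow> form e e' = 0"
    and unit_norms: "\<And>e. e \<in> E \<Longrightarrow> form e e \<in> {1, -1, \<i>, -\<i>}"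
begin

lemma form_basis_left:
  assumes e: "e \<in> E"
  shows "form e w = cnj (coordinate sc E e w) * form e e"
proof -
  have "form e w = form e (\<Sum>x\<in>E. sc (coordinate sc E x w) x)"
    by (simp add: E.sum_coordinate_scale)
  also have "\<dots> = (\<Sum>x\<in>E. cnj (coordinate sc E x w) * form e x)"
    using form_in_dV unfolding dV_def
    by (intro conj_functionals_sum[where W = UNIV] module_axioms) auto
  also have "\<dots> = cnj (coordinate sc E e w) * form e e +
      (\<Sum>x\<in>E - {e}. cnj (coordinate sc E x w) * form e x)"
    by (rule sum.remove[OF E.finite_Basis e])
  also have "(\<Sum>x\<in>E - {e}. cnj (coordinate sc E x w) * form e x) = 0"
    using e by (intro sum.neutral) (auto simp: orthogonal)
  finally show ?thesis by simp
qed

lemma form_normalized_basis: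
  assumes e: "e \<in> E"
  shows "form (sc (inverse (form e e)) e) = cnj \<circ> coordinate sc E e"
proof
  fix w
  have "form e e \<noteq> 0" using unit_norms[OF e] by auto
  then show "form (sc (inverse (form e e)) e) w = (cnj \<circ> coordinate sc E e) w"
    using form_basis_left[OF e, of w] by (simp add: form_linear fscale_def)
qed

lemma dual_form_coordinate:
  assumes e: "e \<in> E" and e': "e' \<in> E"
  shows "dual_form sc Bas form (coordinate sc E e) (coordinate sc E e') =
    (if e = e' then inverse (form e e) else 0)"
proof -
  have "dual_form sc Bas form (coordinate sc E e) (coordinate sc E e') =
      coordinate sc E e (sc (inverse (form e' e')) e')"
    by (rule dual_form_eq[OF E.coordinate_in_dual_space E.coordinate_in_dual_space
          form_normalized_basis[OF e']])
  also have "\<dots> = inverse (form e' e') * coordinate sc E e e'"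
    using E.coordinate_in_dual_space by (simp add: dual_space_def Vector_Spaces.linear_iff)
  finally show ?thesis using E.coordinate_basis[OF e'] by simp
qed

lemma card_dual_norm:
  "card {f \<in> coordinate sc E ` E. dual_form sc Bas form f f = c} =
    card {e \<in> E. form e e = inverse c}"
proof -
  have "{f \<in> coordinate sc E ` E. dual_form sc Bas form f f = c} =
      coordinate sc E ` {e \<in> E. inverse (form e e) = c}"
    by (auto simp: dual_form_coordinate)
  also have "{e \<in> E. inverse (form e e) = c} = {e \<in> E. form e e = inverse c}"
    by (metis inverse_inverse_eq)
  finally show ?thesis
    by (simp add: card_image inj_on_subset[OF E.inj_on_coordinate])
qed

lemma has_signature_dual:
  "has_signature fscale (dual_space sc) (dual_even sc V1) (dual_odd sc V0) (dual_form sc Bas form)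
     (card {e \<in> E. form e e = 1}) (card {e \<in> E. form e e = -1})
     (card {e \<in> E. form e e = -\<i>}) (card {e \<in> E. form e e = \<i>})"
  unfolding has_signature_def
proof (intro exI[of _ "coordinate sc E ` E"] conjI)
  show "finite (coordinate sc E ` E)" using E.finite_Basis by simp
  show "coordinate sc E ` E \<subseteq> dual_space sc" using E.coordinate_in_dual_space by blast
  show "\<not> module.dependent fscale (coordinate sc E ` E)" by (rule E.coordinate_independent)
  show "module.span fscale (coordinate sc E ` E) = dual_space sc" by (rule E.span_coordinate)
  show "\<forall>f\<in>coordinate sc E ` E. f \<in> dual_even sc V1 \<or> f \<in> dual_odd sc V0"
    using E.coordinate_homogeneous[OF grading homogeneous] by blast
  show "\<forall>f\<in>coordinate sc E ` E. \<forall>g\<in>coordinate sc E ` E.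
      f \<noteq> g \<longrightarrow> dual_form sc Bas form f g = 0"
    by (auto simp: dual_form_coordinate)
  show "\<forall>f\<in>coordinate sc E ` E. dual_form sc Bas form f f \<in> {1, -1, \<i>, -\<i>}"
    by (auto simp: dual_form_coordinate dest!: unit_norms)
qed (simp_all add: card_dual_norm)

end

theorem mainTheorem16:
  fixes sc :: "complex \<Rightarrow> 'v::ab_group_add \<Rightarrow> 'v"
    and Bas V0 V1 :: "'v set"
    and form :: "'v \<Rightarrow> 'v \<Rightarrow> complex"
    and p1 p2 p3 p4 :: nat
  assumes "herm_super sc Bas V0 V1 form"
    and "has_signature sc UNIV V0 V1 form p1 p2 p3 p4"
  shows "has_signature fscale (dual_space sc) (dual_even sc V1) (dual_odd sc V0)
           (dual_form sc Bas form) p1 p2 p4 p3"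
proof -
  interpret herm_super_space sc Bas V0 V1 form by (rule herm_super_space.intro) (rule assms(1))
  obtain E where basis: "finite E" "independent E" "span E = UNIV"
    and homogeneous: "\<forall>e\<in>E. e \<in> V0 \<or> e \<in> V1"
    and orthogonal: "\<forall>e\<in>E. \<forall>e'\<in>E. e \<noteq> e' \<longrightarrow> form e e' = 0"
    and unit_norms: "\<forall>e\<in>E. form e e \<in> {1, -1, \<i>, -\<i>}"
    and counts: "card {e\<in>E. form e e = 1} = p1" "card {e\<in>E. form e e = -1} = p2"
      "card {e\<in>E. form e e = \<i>} = p3" "card {e\<in>E. form e e = -\<i>} = p4"
    using assms(2) unfolding has_signature_def by blast
  interpret herm_orthonormal_basis sc Bas V0 V1 form E
    by unfold_locales (use basis homogeneous orthogonal unit_norms in auto)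
  show ?thesis using has_signature_dual by (simp add: counts)
qed

end
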